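(* Let $\mathcal{X}=\mathbb{R}^d$ be the instance space and let $h:\mathcal{X}\to\{0,1\}$ be a fixed (oracle) instance-labeling function. For a finite bag (set) of instances $B\subset\mathcal{X}$, define the oracle bag label $\phi^*(B)=\max_{\mathbf{z}\in B} h(\mathbf{z})$ (the Boolean OR of the instance labels, with $\phi^*(\emptyset)=0$). Let $X$ be a random bag, and let $Y=\phi^*(X)$ be its label. Fix a candidate instance $\mathbf{x}\in\mathcal{X}$. Let $T\in\{0,1\}$ be a treatment indicator independent of $X$ with $0<P(T=1)<1$, and define the post-treatment label $$Y^*=\begin{cases}\phi^*(X\cup\{\mathbf{x}\}) & \text{if } T=1,\\ \phi^*(X\setminus\{\mathbf{x}\}) & \text{if } T=0.\end{cases}$$ Define the causal effect $\tau(\mathbf{x})=\mathbb{E}[Y^*\mid T=1]-\mathbb{E}[Y^*\mid T=0]$. Then $$\tau(\mathbf{x}) = P(Y=0)\cdot \mathbb{E}[Y^*\mid Y=0,\,T=1] + c,$$ where $c$ is the probability that the bag $X$ contains one and only one positive instance and that instance is $\mathbf{x}$, i.e. $c=P\big(\mathbf{x}\in X,\ h(\mathbf{x})=1,\ h(\mathbf{z})=0 \text{ for all } \mathbf{z}\in X\setminus\{\mathbf{x}\}\big)$.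
   Context: Multi-instance learning setting under the standard multi-instance assumption: a bag is positive (label 1) iff at least one of its instances is positive, and negative iff all instances are negative. "Adding $\mathbf{x}$ to a bag" is regarded as the treatment ($T=1$) and "removing $\mathbf{x}$ from (or not including it in) a bag" as the control ($T=0$); $Y^*$ is the bag label after treatment as given by the oracle classifier $\phi^*$. The term $P(Y=0)\cdot\mathbb{E}[Y^*\mid Y=0,T=1]$ is interpreted as $0$ when $P(Y=0)=0$. *)

theory Defs
  imports "HOL-Probability.Probability"
begin

definition phi_star :: "('a \<Rightarrow> nat) \<Rightarrow> 'a set \<Rightarrow> nat" where
  "phi_star h B = (if B = {} then 0 else Max (h ` B))"

definition Ystar :: "('a \<Rightarrow> nat) \<Rightarrow> 'a \<Rightarrow> 'a set \<Rightarrow> bool \<Rightarrow> nat" where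
  "Ystar h x B t = (if t then phi_star h (insert x B) else phi_star h (B - {x}))"

text \<open>Elementary conditional expectation given an event A: E[f | A] = E[f 1_A] / P(A)
  (equal to 0 when P(A) = 0, by the convention x / 0 = 0).\<close>
definition cond_exp_event :: "'w measure \<Rightarrow> ('w \<Rightarrow> real) \<Rightarrow> 'w set \<Rightarrow> real" where
  "cond_exp_event M f A = (\<integral>\<omega>. f \<omega> * indicator A \<omega> \<partial>M) / measure M A"

end

theory Submission
  imports Defs
begin

text \<open>Since T is independent of X, conditioning on T = t leaves the law of X unchanged:
  E[Y* | T = 1] is the probability that X \<union> {x} is positive, E[Y* | T = 0] the probability
  that X - {x} is positive, and P(Y = 0) E[Y* | Y = 0, T = 1] the probability that X is negative
  but X \<union> {x} is positive. A positive bag stays positive when x is added, and it stays positive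
  when x is removed unless x is its only positive instance; subtracting the two probabilities
  therefore leaves exactly the last two events.\<close>

lemma phi_star_le_1:
  assumes "\<And>z. h z \<le> 1"
  shows "phi_star h B \<le> 1"
proof -
  have "finite (h ` B)"
    by (rule finite_subset[of _ "{..1}"]) (use assms in auto)
  then show ?thesis
    using assms by (auto simp: phi_star_def)
qed

lemma phi_star_eq_1_iff:
  assumes "finite B" "\<And>z. h z \<le> 1"
  shows "phi_star h B = 1 \<longleftrightarrow> (\<exists>z\<in>B. h z = 1)"
proof
  assume "phi_star h B = 1"
  then have "B \<noteq> {}" "Max (h ` B) = 1"
    by (auto simp: phi_star_def split: if_splits)
  then show "\<exists>z\<in>B. h z = 1"
    using Max_in[of "h ` B"] assms(1) by auto
next
  assume "\<exists>z\<in>B. h z = 1"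
  then obtain z where "z \<in> B" "h z = 1"
    by blast
  moreover have "h z \<le> Max (h ` B)"
    using \<open>z \<in> B\<close> assms(1) by (metis Max_ge finite_imageI imageI)
  ultimately have "B \<noteq> {}" "1 \<le> Max (h ` B)"
    by auto
  moreover have "Max (h ` B) \<le> 1"
    using phi_star_le_1[of h B] assms(2) \<open>B \<noteq> {}\<close> by (simp add: phi_star_def)
  ultimately show "phi_star h B = 1"
    by (simp add: phi_star_def)
qed

lemma phi_star_eq_1_cases:
  assumes "finite B" "\<And>z. h z \<le> 1"
  shows "phi_star h B = 1 \<longleftrightarrow>
    phi_star h (B - {x}) = 1 \<or> (x \<in> B \<and> h x = 1 \<and> (\<forall>z\<in>B - {x}. h z = 0))"
proof -
  have "h z \<noteq> 1 \<longleftrightarrow> h z = 0" for z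
    using assms(2)[of z] by arith
  then show ?thesis
    unfolding phi_star_eq_1_iff[OF assms] phi_star_eq_1_iff[OF finite_Diff[OF assms(1)] assms(2)]
    by blast
qed

lemma phi_star_insert_eq_1:
  assumes "finite B" "\<And>z. h z \<le> 1" "phi_star h B = 1"
  shows "phi_star h (insert x B) = 1"
  using assms(3)
  unfolding phi_star_eq_1_iff[OF assms(1,2)] phi_star_eq_1_iff[OF finite.insertI[OF assms(1)] assms(2)]
  by blast

lemma (in prob_space) prob_times_cond_exp_event_indep:
  assumes events: "B \<in> events" "C \<in> events" "E \<in> events"
    and indep: "prob (B \<inter> E) = prob B * prob E" "prob (C \<inter> B \<inter> E) = prob (C \<inter> B) * prob E"
    and "prob E \<noteq> 0"
    and f: "\<And>\<omega>. \<omega> \<in> B \<inter> E \<Longrightarrow> f \<omega> = indicator C \<omega>"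
  shows "prob B * cond_exp_event M f (B \<inter> E) = prob (C \<inter> B)"
proof -
  have "(\<integral>\<omega>. f \<omega> * indicator (B \<inter> E) \<omega> \<partial>M) = (\<integral>\<omega>. indicator (C \<inter> B \<inter> E) \<omega> \<partial>M)"
    using f by (intro Bochner_Integration.integral_cong) (auto simp: indicator_def)
  also have "\<dots> = prob (C \<inter> B) * prob E"
    using events indep(2) by (simp add: Int_absorb2 sets.sets_into_space)
  finally have cond_exp: "cond_exp_event M f (B \<inter> E) = prob (C \<inter> B) * prob E / (prob B * prob E)"
    by (simp add: cond_exp_event_def indep(1))
  show ?thesis
  proof (cases "prob B = 0")
    case True
    then show ?thesis
      using finite_measure_mono[of "C \<inter> B" B] events by (simp add: measure_le_0_iff)
  next
    case False
    then show ?thesis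
      using cond_exp \<open>prob E \<noteq> 0\<close> by simp
  qed
qed

corollary (in prob_space) cond_exp_event_indep:
  assumes "C \<in> events" "E \<in> events"
    and "prob (C \<inter> E) = prob C * prob E" "prob E \<noteq> 0"
    and "\<And>\<omega>. \<omega> \<in> E \<Longrightarrow> f \<omega> = indicator C \<omega>"
  shows "cond_exp_event M f E = prob C"
  using prob_times_cond_exp_event_indep[of "space M" C E f] assms
  by (simp add: prob_space Int_absorb1 Int_absorb2 sets.sets_into_space)

locale bag_treatment = prob_space M
  for M :: "'w measure" and N :: "'b set measure"
    and X :: "'w \<Rightarrow> 'b set" and T :: "'w \<Rightarrow> bool" and h :: "'b \<Rightarrow> nat" and x :: 'b +
  assumes label_le_1: "\<And>z. h z \<le> 1"
    and X_measurable: "X \<in> M \<rightarrow>\<^sub>M N"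
    and T_measurable: "T \<in> M \<rightarrow>\<^sub>M count_space UNIV"
    and indep_X_T: "\<And>A t. A \<in> sets N \<Longrightarrow>
       prob {\<omega> \<in> space M. X \<omega> \<in> A \<and> T \<omega> = t}
       = prob {\<omega> \<in> space M. X \<omega> \<in> A} * prob {\<omega> \<in> space M. T \<omega> = t}"
    and finite_bag: "\<And>\<omega>. \<omega> \<in> space M \<Longrightarrow> finite (X \<omega>)"
    and prob_treated_gt_0: "0 < prob {\<omega> \<in> space M. T \<omega>}"
    and prob_treated_less_1: "prob {\<omega> \<in> space M. T \<omega>} < 1"
    and positive_with_x_sets: "{B. phi_star h (insert x B) = 1} \<in> sets N"
    and positive_without_x_sets: "{B. phi_star h (B - {x}) = 1} \<in> sets N"
    and negative_sets: "{B. phi_star h B = 0} \<in> sets N"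
    and x_sole_positive_sets: "{B. x \<in> B \<and> h x = 1 \<and> (\<forall>z \<in> B - {x}. h z = 0)} \<in> sets N"
begin

definition bag_event :: "'b set set \<Rightarrow> 'w set" where
  "bag_event A = {\<omega> \<in> space M. X \<omega> \<in> A}"

definition treated :: "bool \<Rightarrow> 'w set" where
  "treated t = {\<omega> \<in> space M. T \<omega> = t}"

definition positive_with_x :: "'b set set" where
  "positive_with_x = {B. phi_star h (insert x B) = 1}"

definition positive_without_x :: "'b set set" where
  "positive_without_x = {B. phi_star h (B - {x}) = 1}"

definition negative :: "'b set set" where
  "negative = {B. phi_star h B = 0}"

definition x_sole_positive :: "'b set set" where
  "x_sole_positive = {B. x \<in> B \<and> h x = 1 \<and> (\<forall>z \<in> B - {x}. h z = 0)}"

abbreviation post_label :: "'w \<Rightarrow> real" where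
  "post_label \<equiv> \<lambda>\<omega>. real (Ystar h x (X \<omega>) (T \<omega>))"

lemma bag_sets:
  "positive_with_x \<in> sets N" "positive_without_x \<in> sets N" "negative \<in> sets N"
  "x_sole_positive \<in> sets N"
  using positive_with_x_sets positive_without_x_sets negative_sets x_sole_positive_sets
  by (simp_all add: positive_with_x_def positive_without_x_def negative_def x_sole_positive_def)

lemma bag_event_sets: "A \<in> sets N \<Longrightarrow> bag_event A \<in> events"
  using measurable_sets[OF X_measurable] by (simp add: bag_event_def vimage_def Int_def conj_commute)

lemma bag_event_Int: "bag_event (A \<inter> B) = bag_event A \<inter> bag_event B"
  by (auto simp: bag_event_def)

lemma treated_sets: "treated t \<in> events"
  using T_measurable unfolding treated_def by measurable

lemma prob_treated_nonzero: "prob (treated t) \<noteq> 0"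
proof -
  have "treated False = space M - treated True"
    by (auto simp: treated_def)
  then have "prob (treated False) = 1 - prob (treated True)"
    using prob_compl[OF treated_sets] by simp
  moreover have "0 < prob (treated True)" "prob (treated True) < 1"
    using prob_treated_gt_0 prob_treated_less_1 by (simp_all add: treated_def)
  ultimately show ?thesis
    by (cases t) simp_all
qed

lemma prob_bag_event_treated:
  assumes "A \<in> sets N"
  shows "prob (bag_event A \<inter> treated t) = prob (bag_event A) * prob (treated t)"
proof -
  have "bag_event A \<inter> treated t = {\<omega> \<in> space M. X \<omega> \<in> A \<and> T \<omega> = t}"
    by (auto simp: bag_event_def treated_def)
  with indep_X_T[OF assms] show ?thesis
    by (simp only: bag_event_def treated_def)
qed

lemma post_label_treated:
  assumes "\<omega> \<in> treated True"
  shows "post_label \<omega> = indicator (bag_event positive_with_x) \<omega>"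
proof -
  have "phi_star h (insert x (X \<omega>)) \<le> 1"
    by (rule phi_star_le_1[OF label_le_1])
  then show ?thesis
    using assms
    by (cases "phi_star h (insert x (X \<omega>)) = 1")
      (simp_all add: Ystar_def bag_event_def positive_with_x_def treated_def)
qed

lemma post_label_control:
  assumes "\<omega> \<in> treated False"
  shows "post_label \<omega> = indicator (bag_event positive_without_x) \<omega>"
proof -
  have "phi_star h (X \<omega> - {x}) \<le> 1"
    by (rule phi_star_le_1[OF label_le_1])
  then show ?thesis
    using assms
    by (cases "phi_star h (X \<omega> - {x}) = 1")
      (simp_all add: Ystar_def bag_event_def positive_without_x_def treated_def)
qed

lemma cond_exp_treated:
  "cond_exp_event M post_label {\<omega> \<in> space M. T \<omega>} = prob (bag_event positive_with_x)"
proof -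
  have "{\<omega> \<in> space M. T \<omega>} = treated True"
    by (simp add: treated_def)
  moreover note cond_exp_event_indep[OF bag_event_sets[OF bag_sets(1)] treated_sets
      prob_bag_event_treated[OF bag_sets(1)] prob_treated_nonzero post_label_treated]
  ultimately show ?thesis
    by (simp only:)
qed

lemma cond_exp_control:
  "cond_exp_event M post_label {\<omega> \<in> space M. \<not> T \<omega>} = prob (bag_event positive_without_x)"
proof -
  have "{\<omega> \<in> space M. \<not> T \<omega>} = treated False"
    by (simp add: treated_def)
  moreover note cond_exp_event_indep[OF bag_event_sets[OF bag_sets(2)] treated_sets
      prob_bag_event_treated[OF bag_sets(2)] prob_treated_nonzero post_label_control]
  ultimately show ?thesis
    by (simp only:)
qed

lemma prob_negative_times_cond_exp:
  "prob {\<omega> \<in> space M. phi_star h (X \<omega>) = 0}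
      * cond_exp_event M post_label {\<omega> \<in> space M. phi_star h (X \<omega>) = 0 \<and> T \<omega>}
    = prob (bag_event positive_with_x \<inter> bag_event negative)"
proof -
  have "{\<omega> \<in> space M. phi_star h (X \<omega>) = 0} = bag_event negative"
    and "{\<omega> \<in> space M. phi_star h (X \<omega>) = 0 \<and> T \<omega>} = bag_event negative \<inter> treated True"
    by (auto simp: bag_event_def treated_def negative_def)
  moreover have "prob (bag_event positive_with_x \<inter> bag_event negative \<inter> treated True)
      = prob (bag_event positive_with_x \<inter> bag_event negative) * prob (treated True)"
    using prob_bag_event_treated[of "positive_with_x \<inter> negative"] bag_sets
    by (simp add: bag_event_Int)
  note prob_times_cond_exp_event_indep[OF bag_event_sets[OF bag_sets(3)]
      bag_event_sets[OF bag_sets(1)] treated_sets prob_bag_event_treated[OF bag_sets(3)]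
      this prob_treated_nonzero post_label_treated[OF IntD2]]
  ultimately show ?thesis
    by (simp only:)
qed

lemma prob_positive_with_x_split:
  "prob (bag_event positive_with_x) = prob (bag_event positive_with_x \<inter> bag_event negative)
    + prob (bag_event positive_without_x) + prob (bag_event x_sole_positive)"
proof -
  have "X \<omega> \<in> positive_with_x - negative \<longleftrightarrow> X \<omega> \<in> positive_without_x \<union> x_sole_positive"
    if "\<omega> \<in> space M" for \<omega>
  proof -
    have fin: "finite (X \<omega>)"
      using finite_bag[OF that] .
    have "X \<omega> \<notin> negative \<longleftrightarrow> phi_star h (X \<omega>) = 1"
      using phi_star_le_1[of h "X \<omega>", OF label_le_1] by (auto simp: negative_def)
    then show ?thesis
      using phi_star_insert_eq_1[OF fin label_le_1]
        phi_star_eq_1_cases[of "X \<omega>" h x, OF fin label_le_1]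
      by (auto simp: positive_with_x_def positive_without_x_def x_sole_positive_def)
  qed
  then have "bag_event positive_with_x - bag_event negative
      = bag_event positive_without_x \<union> bag_event x_sole_positive"
    by (auto simp: bag_event_def)
  moreover have "bag_event positive_without_x \<inter> bag_event x_sole_positive = {}"
    using finite_bag phi_star_eq_1_iff[OF finite_Diff label_le_1]
    by (fastforce simp: bag_event_def positive_without_x_def x_sole_positive_def)
  ultimately show ?thesis
    using finite_measure_Diff'[of "bag_event positive_with_x" "bag_event negative"]
      finite_measure_Union[of "bag_event positive_without_x" "bag_event x_sole_positive"]
      bag_event_sets bag_sets
    by simp
qed

end

theorem theorem1:
  fixes M :: "'w measure" and N :: "(real ^ 'd) set measure"
    and X :: "'w \<Rightarrow> (real ^ 'd) set" and T :: "'w \<Rightarrow> bool"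
    and h :: "real ^ 'd \<Rightarrow> nat" and x :: "real ^ 'd"
  assumes "prob_space M"
    and "\<And>z. h z \<le> 1"
    and "X \<in> M \<rightarrow>\<^sub>M N"
    and "T \<in> M \<rightarrow>\<^sub>M count_space UNIV"
    and "\<And>A t. A \<in> sets N \<Longrightarrow>
       measure M {\<omega> \<in> space M. X \<omega> \<in> A \<and> T \<omega> = t}
       = measure M {\<omega> \<in> space M. X \<omega> \<in> A} * measure M {\<omega> \<in> space M. T \<omega> = t}"
    and "\<And>\<omega>. \<omega> \<in> space M \<Longrightarrow> finite (X \<omega>)"
    and "0 < measure M {\<omega> \<in> space M. T \<omega>}"
    and "measure M {\<omega> \<in> space M. T \<omega>} < 1"
    and "{B. phi_star h (insert x B) = 1} \<in> sets N"
    and "{B. phi_star h (B - {x}) = 1} \<in> sets N"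
    and "{B. phi_star h B = 0} \<in> sets N"
    and "{B. x \<in> B \<and> h x = 1 \<and> (\<forall>z \<in> B - {x}. h z = 0)} \<in> sets N"
  shows "cond_exp_event M (\<lambda>\<omega>. real (Ystar h x (X \<omega>) (T \<omega>))) {\<omega> \<in> space M. T \<omega>}
         - cond_exp_event M (\<lambda>\<omega>. real (Ystar h x (X \<omega>) (T \<omega>))) {\<omega> \<in> space M. \<not> T \<omega>}
       = measure M {\<omega> \<in> space M. phi_star h (X \<omega>) = 0}
           * cond_exp_event M (\<lambda>\<omega>. real (Ystar h x (X \<omega>) (T \<omega>)))
               {\<omega> \<in> space M. phi_star h (X \<omega>) = 0 \<and> T \<omega>}
         + measure M {\<omega> \<in> space M. x \<in> X \<omega> \<and> h x = 1 \<and> (\<forall>z \<in> X \<omega> - {x}. h z = 0)}"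
proof -
  interpret bag_treatment M N X T h x
    using assms by (simp add: bag_treatment_def bag_treatment_axioms_def)
  have "{\<omega> \<in> space M. x \<in> X \<omega> \<and> h x = 1 \<and> (\<forall>z \<in> X \<omega> - {x}. h z = 0)}
      = bag_event x_sole_positive"
    by (simp add: bag_event_def x_sole_positive_def)
  then show ?thesis
    using cond_exp_treated cond_exp_control prob_negative_times_cond_exp prob_positive_with_x_split
    by simp
qed

end
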